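(* Let $N\ge 2$ and consider the synchronous-play slotted-ALOHA game among $N$ players in which player $i$ chooses a transmission (access) probability $q_i\in[0,1]$ and has net utility $$V_i(\underline{q})=C_i\log\gamma_i(\underline{q})+A_i\,\alpha_i(\underline{q}_{-i})\,\overline{\gamma}_{-i}(\underline{q})-M_i q_i,$$ where $\gamma_i(\underline{q})=q_i\prod_{j\ne i}(1-q_j)$, $\alpha_i(\underline{q}_{-i})=\prod_{j\ne i}(1-q_j)$, and $\overline{\gamma}_{-i}(\underline{q})=\frac{1}{N-1}\sum_{j\ne i}\gamma_j(\underline{q})$, with $C_i,M_i>0$ and $A_i\ge 0$. Suppose all players have the same normalized parameters $c:=C_i/M_i<1$ and $a:=A_i/M_i$. Then there is a symmetric Nash equilibrium $\underline{q}^*=q^*\underline{1}$ (where $\underline{1}$ is the all-ones vector in $\mathbb{R}^N$), where $0<q^*<1$ is a solution of $$f(q):=a q^2(1-q)^{2N-3}+q-c=0.$$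
   Context: $\underline{q}=(q_1,\dots,q_N)$ is the profile of access probabilities and $\underline{q}_{-i}$ is the profile of all players other than $i$. $\gamma_i$ is player $i$'s mean throughput (probability of a successful transmission by $i$ in a slot), $\alpha_i$ is player $i$'s dynamic altruism factor, and $\overline{\gamma}_{-i}$ is the mean throughput of the other players. A Nash equilibrium is a profile $\underline{q}^*$ such that for each $i$, $q_i^*$ maximizes $V_i(q_i;\underline{q}^*_{-i})$ over $q_i\in[0,1]$ (with $\log 0=-\infty$). *)

theory Defs
  imports Complex_Main "HOL-Library.Extended_Real"
begin

text \<open>Players are indexed by 0,...,N-1; a profile is a function q :: nat => real.\<close>

definition others :: "nat \<Rightarrow> nat \<Rightarrow> nat set" where
  "others N i = {0..<N} - {i}"

definition thr :: "nat \<Rightarrow> (nat \<Rightarrow> real) \<Rightarrow> nat \<Rightarrow> real" where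
  "thr N q i = q i * (\<Prod>j\<in>others N i. (1 - q j))"

definition altr :: "nat \<Rightarrow> (nat \<Rightarrow> real) \<Rightarrow> nat \<Rightarrow> real" where
  "altr N q i = (\<Prod>j\<in>others N i. (1 - q j))"

definition thr_others :: "nat \<Rightarrow> (nat \<Rightarrow> real) \<Rightarrow> nat \<Rightarrow> real" where
  "thr_others N q i = (\<Sum>j\<in>others N i. thr N q j) / (real N - 1)"

text \<open>Net utility, valued in the extended reals so that log 0 = -infinity.\<close>
definition utility :: "nat \<Rightarrow> (nat \<Rightarrow> real) \<Rightarrow> (nat \<Rightarrow> real) \<Rightarrow> (nat \<Rightarrow> real)
    \<Rightarrow> (nat \<Rightarrow> real) \<Rightarrow> nat \<Rightarrow> ereal" where
  "utility N C A M q i =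
     (if thr N q i = 0 then -\<infinity>
      else ereal (C i * ln (thr N q i) + A i * altr N q i * thr_others N q i - M i * q i))"

definition nash_eq :: "nat \<Rightarrow> (nat \<Rightarrow> real) \<Rightarrow> (nat \<Rightarrow> real) \<Rightarrow> (nat \<Rightarrow> real)
    \<Rightarrow> (nat \<Rightarrow> real) \<Rightarrow> bool" where
  "nash_eq N C A M q \<longleftrightarrow>
     (\<forall>j<N. 0 \<le> q j \<and> q j \<le> 1) \<and>
     (\<forall>i<N. \<forall>x\<in>{0..1}. utility N C A M (q(i := x)) i \<le> utility N C A M q i)"

end

theory Submission
  imports Defs
begin

text \<open>If every other player plays q, player i's payoff from playing x is, up to a constant,
  C ln x - (M + A q (1 - q)^(2N-3)) x. This is strictly concave in x, and its maximiser
  x = C / (M + A q (1 - q)^(2N-3)) equals q exactly when f(q) = 0 (after dividing by M).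
  A root of f in (0,1) exists by the intermediate value theorem, since f(0) = -c < 0 and
  f(1) = 1 - c > 0.\<close>

lemma prod_one_minus_deviation:
  assumes "finite S"
  shows "(\<Prod>j\<in>S. 1 - ((\<lambda>_. q)(i := x)) j) =
           (if i \<in> S then (1 - x) * (1 - q)^(card S - 1) else (1 - q)^card S)"
proof (cases "i \<in> S")
  case True
  have "(\<Prod>j\<in>S. 1 - ((\<lambda>_. q)(i := x)) j) = (1 - x) * (\<Prod>j\<in>S - {i}. 1 - q)"
    using assms True by (simp add: prod.remove)
  then show ?thesis using assms True by simp
next
  case False
  then have "(\<Prod>j\<in>S. 1 - ((\<lambda>_. q)(i := x)) j) = (\<Prod>j\<in>S. 1 - q)"
    by (intro prod.cong) auto
  then show ?thesis using False by simp
qed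

lemma finite_others: "finite (others N i)"
  by (simp add: others_def)

lemma card_others: "i < N \<Longrightarrow> card (others N i) = N - 1"
  by (simp add: others_def)

lemma thr_deviation_self:
  "i < N \<Longrightarrow> thr N ((\<lambda>_. q)(i := x)) i = x * (1 - q)^(N - 1)"
  by (simp add: thr_def prod_one_minus_deviation card_others) (simp add: others_def)

lemma thr_deviation_other:
  assumes "i < N" "j \<in> others N i"
  shows "thr N ((\<lambda>_. q)(i := x)) j = q * (1 - x) * (1 - q)^(N - 2)"
proof -
  have "j < N" "j \<noteq> i" "i \<in> others N j" using assms by (auto simp: others_def)
  have "(\<Prod>k\<in>others N j. 1 - ((\<lambda>_. q)(i := x)) k) = (1 - x) * (1 - q)^(N - 2)"
    unfolding prod_one_minus_deviation[OF finite_others]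
    using \<open>i \<in> others N j\<close> card_others[OF \<open>j < N\<close>] by (simp add: numeral_2_eq_2)
  then show ?thesis using \<open>j \<noteq> i\<close> by (simp add: thr_def)
qed

lemma altr_deviation:
  "i < N \<Longrightarrow> altr N ((\<lambda>_. q)(i := x)) i = (1 - q)^(N - 1)"
  by (simp add: altr_def prod_one_minus_deviation card_others) (simp add: others_def)

lemma thr_others_deviation:
  assumes "i < N" "N \<ge> 2"
  shows "thr_others N ((\<lambda>_. q)(i := x)) i = q * (1 - x) * (1 - q)^(N - 2)"
proof -
  have "(\<Sum>j\<in>others N i. thr N ((\<lambda>_. q)(i := x)) j) = real (N - 1) * (q * (1 - x) * (1 - q)^(N - 2))"
    using card_others[OF assms(1)] by (simp add: thr_deviation_other[OF assms(1)])
  then show ?thesis using assms by (simp add: thr_others_def of_nat_diff)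
qed

lemma utility_deviation_zero:
  "i < N \<Longrightarrow> utility N C A M ((\<lambda>_. q)(i := 0)) i = -\<infinity>"
  by (simp add: utility_def thr_deviation_self)

lemma utility_deviation:
  assumes "i < N" "N \<ge> 2" "0 < x" "q < 1"
  shows "utility N C A M ((\<lambda>_. q)(i := x)) i =
           ereal (C i * ln ((1 - q)^(N - 1)) + (C i * ln x - (M i + A i * q * (1 - q)^(2*N - 3)) * x)
                  + A i * q * (1 - q)^(2*N - 3))"
proof -
  have pos: "(1 - q)^(N - 1) > 0" using assms(4) by simp
  have exp: "2*N - 3 = (N - 1) + (N - 2)" using assms(2) by simp
  have alt: "altr N ((\<lambda>_. q)(i := x)) i * thr_others N ((\<lambda>_. q)(i := x)) i = q * (1 - x) * (1 - q)^(2*N - 3)"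
    unfolding altr_deviation[OF assms(1)] thr_others_deviation[OF assms(1,2)] exp
    by (simp add: power_add)
  have ln: "ln (x * (1 - q)^(N - 1)) = ln x + ln ((1 - q)^(N - 1))"
    using assms(3) pos by (rule ln_mult_pos)
  have thr: "thr N ((\<lambda>_. q)(i := x)) i = x * (1 - q)^(N - 1)"
    using assms(1) by (rule thr_deviation_self)
  have "utility N C A M ((\<lambda>_. q)(i := x)) i =
      ereal (C i * ln (x * (1 - q)^(N - 1)) + A i * (altr N ((\<lambda>_. q)(i := x)) i
        * thr_others N ((\<lambda>_. q)(i := x)) i) - M i * x)"
    using assms(3,4) pos by (simp add: utility_def thr mult.assoc)
  then show ?thesis unfolding ln alt by (simp add: algebra_simps)
qed

text \<open>The tangent line of the concave function ln at q lies above it.\<close>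

lemma ln_minus_linear_le_at_optimum:
  fixes b q x :: real
  assumes "0 < x" "0 < q" "0 \<le> b"
  shows "b * q * ln x - b * x \<le> b * q * ln q - b * q"
proof -
  have "ln (x / q) \<le> x / q - 1" using assms by (intro ln_le_minus_one) simp
  then have "ln x \<le> ln q + (x - q) / q" using assms by (simp add: ln_div diff_divide_distrib)
  then have "b * q * ln x \<le> b * q * (ln q + (x - q) / q)"
    using assms by (intro mult_left_mono) auto
  also have "\<dots> = b * q * ln q + b * (x - q)" using assms(2) by (simp add: field_simps)
  finally show ?thesis by (simp add: right_diff_distrib)
qed

lemma equilibrium_equation_has_root:
  fixes a c :: real and n :: nat
  assumes "0 < c" "c < 1" "n > 0"
  shows "\<exists>q. 0 < q \<and> q < 1 \<and> a * q^2 * (1 - q)^n + q - c = 0"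
proof -
  define f where "f q = a * q^2 * (1 - q)^n + q - c" for q :: real
  have "f 0 < 0" "f 1 > 0" using assms by (simp_all add: f_def zero_power)
  moreover have "\<forall>x. 0 \<le> x \<and> x \<le> 1 \<longrightarrow> isCont f x" unfolding f_def by (intro allI impI continuous_intros)
  ultimately obtain q where "0 \<le> q" "q \<le> 1" "f q = 0"
    using IVT[of f 0 0 1] by force
  moreover from this have "q \<noteq> 0" "q \<noteq> 1" using \<open>f 0 < 0\<close> \<open>f 1 > 0\<close> by auto
  ultimately show ?thesis unfolding f_def by force
qed

lemma symmetric_root_is_nash_eq:
  fixes q a c :: real
  assumes "N \<ge> 2"
    and params: "\<forall>i<N. M i > 0 \<and> A i \<ge> 0 \<and> C i = c * M i \<and> A i = a * M i"
    and "0 < q" "q < 1"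
    and root: "a * q^2 * (1 - q)^(2*N - 3) + q - c = 0"
  shows "nash_eq N C A M (\<lambda>_. q)"
  unfolding nash_eq_def
proof (intro conjI allI impI ballI)
  fix i x assume i: "i < N" and x: "x \<in> {0..(1::real)}"
  define b where "b = M i + A i * q * (1 - q)^(2*N - 3)"
  have "M i > 0" "A i \<ge> 0" using params i by auto
  then have "b \<ge> 0" using \<open>0 < q\<close> \<open>q < 1\<close> by (simp add: b_def)
  have "C i = c * M i" "A i = a * M i" using params i by auto
  moreover have "c = q + a * q^2 * (1 - q)^(2*N - 3)" using root by simp
  ultimately have C_eq: "C i = b * q" by (simp add: b_def power2_eq_square algebra_simps)
  have "(\<lambda>_. q)(i := q) = (\<lambda>_. q)" by auto
  then have at_q: "utility N C A M (\<lambda>_. q) i =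
      ereal (C i * ln ((1 - q)^(N - 1)) + (b * q * ln q - b * q) + A i * q * (1 - q)^(2*N - 3))"
    using utility_deviation[OF i assms(1) \<open>0 < q\<close> \<open>q < 1\<close>, of C A M] by (simp add: b_def C_eq)
  show "utility N C A M ((\<lambda>_. q)(i := x)) i \<le> utility N C A M (\<lambda>_. q) i"
  proof (cases "x = 0")
    case True
    then show ?thesis using utility_deviation_zero[OF i] by simp
  next
    case False
    with x have "0 < x" by simp
    then show ?thesis
      using utility_deviation[OF i assms(1) \<open>0 < x\<close> \<open>q < 1\<close>, of C A M] at_q
        ln_minus_linear_le_at_optimum[OF \<open>0 < x\<close> \<open>0 < q\<close> \<open>b \<ge> 0\<close>]
      by (simp add: b_def[symmetric] C_eq)
  qed
qed (use \<open>0 < q\<close> \<open>q < 1\<close> in auto)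

theorem proposition1:
  fixes N :: nat and C A M :: "nat \<Rightarrow> real" and a c :: real
  assumes "N \<ge> 2"
    and "\<forall>i<N. C i > 0 \<and> M i > 0 \<and> A i \<ge> 0"
    and "\<forall>i<N. C i / M i = c \<and> A i / M i = a"
    and "c < 1"
  shows "\<exists>q::real. 0 < q \<and> q < 1 \<and>
           a * q^2 * (1 - q)^(2*N - 3) + q - c = 0 \<and>
           nash_eq N C A M (\<lambda>_. q)"
proof -
  have params: "\<forall>i<N. M i > 0 \<and> A i \<ge> 0 \<and> C i = c * M i \<and> A i = a * M i"
  proof (intro allI impI)
    fix i assume "i < N"
    with assms(2,3) have "M i > 0" "A i \<ge> 0" "C i / M i = c" "A i / M i = a" by auto
    then show "M i > 0 \<and> A i \<ge> 0 \<and> C i = c * M i \<and> A i = a * M i"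
      by (auto simp: field_simps)
  qed
  have "0 < c" using assms(1-3) by (metis divide_pos_pos less_le_trans pos2)
  then obtain q where "0 < q" "q < 1" "a * q^2 * (1 - q)^(2*N - 3) + q - c = 0"
    using equilibrium_equation_has_root[of c "2*N - 3" a] assms(1,4) by auto
  with symmetric_root_is_nash_eq[OF assms(1) params] show ?thesis by blast
qed

end
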